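(* Let $f$ be a base multi-label classifier with parameter $k'$, $\mathbf{x}\in\mathbb{R}^m$, $\sigma>0$, $\delta\in\mathbb{R}^m\setminus\{0\}$, and $\mathbf{Y}=\mathbf{x}+\delta+\epsilon$ with $\epsilon\sim\mathcal{N}(0,\sigma^2I)$; write $p_i^*=\Pr(i\in f_{k'}(\mathbf{Y}))$ and $p_i=\Pr(i\in f_{k'}(\mathbf{x}+\epsilon))$. Let $\Gamma\subseteq\{1,\dots,c\}$ be a nonempty set of $u$ labels with numbers $\underline{p_i}\in[0,1]$, $\underline{p_i}\le p_i$ for $i\in\Gamma$, such that $\underline{p_\Gamma}:=\sum_{i\in\Gamma}\underline{p_i}\le k'$. Then $$\max_{i\in\Gamma}p_i^*\ \ge\ \max\Big\{\max_{i\in\Gamma}\Phi\big(\Phi^{-1}(\underline{p_i})-\tfrac{\|\delta\|_2}{\sigma}\big),\ \tfrac{k'}{u}\,\Phi\big(\Phi^{-1}(\tfrac{\underline{p_\Gamma}}{k'})-\tfrac{\|\delta\|_2}{\sigma}\big)\Big\}.$$ Similarly, let $\Lambda\subseteq\{1,\dots,c\}$ be a nonempty set of $v$ labels with numbers $\overline{p}_j\in[0,1]$, $p_j\le\overline{p}_j$ for $j\in\Lambda$, such that $\overline{p}_\Lambda:=\sum_{j\in\Lambda}\overline{p}_j\le k'$. Then $$\min_{j\in\Lambda}p_j^*\ \le\ \min\Big\{\min_{j\in\Lambda}\Phi\big(\Phi^{-1}(\overline{p}_j)+\tfrac{\|\delta\|_2}{\sigma}\big),\ \tfrac{k'}{v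}\,\Phi\big(\Phi^{-1}(\tfrac{\overline{p}_\Lambda}{k'})+\tfrac{\|\delta\|_2}{\sigma}\big)\Big\}.$$
   Context: A base multi-label classifier $f$ with parameter $k'$ assigns to every input $\mathbf{w}\in\mathbb{R}^m$ a set $f_{k'}(\mathbf{w})\subseteq\{1,\dots,c\}$ of exactly $k'$ labels (measurably in $\mathbf{w}$). $\Phi$ is the standard normal CDF, $\Phi^{-1}$ its inverse, with $\Phi^{-1}(0)=-\infty$, $\Phi^{-1}(1)=+\infty$, $\Phi(\mp\infty)=0,1$. *)

theory Defs
  imports "HOL-Probability.Probability"
begin

definition Phi :: "real \<Rightarrow> real" where
  "Phi x = measure (density lborel std_normal_density) {..x}"

definition Phi_e :: "ereal \<Rightarrow> real" where
  "Phi_e z = (if z = -\<infinity> then 0 else if z = \<infinity> then 1 else Phi (real_of_ereal z))"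

definition Phi_inv :: "real \<Rightarrow> ereal" where
  "Phi_inv p = (if p \<le> 0 then -\<infinity> else if p \<ge> 1 then \<infinity>
                else ereal (THE x. Phi x = p))"

text \<open>Isotropic Gaussian N(0, sigma^2 I) on the Euclidean space 'a (= R^m, m = DIM('a)).\<close>
definition iso_gauss :: "real \<Rightarrow> ('a::euclidean_space) measure" where
  "iso_gauss \<sigma> = density lborel
     (\<lambda>x. ennreal ((2 * pi * \<sigma>\<^sup>2) powr (- real DIM('a) / 2) * exp (- (norm x)\<^sup>2 / (2 * \<sigma>\<^sup>2))))"

definition multilabel_classifier :: "nat \<Rightarrow> nat \<Rightarrow> ('a::euclidean_space \<Rightarrow> nat set) \<Rightarrow> bool" where
  "multilabel_classifier c k' f \<longleftrightarrow>
     (\<forall>w. f w \<subseteq> {1..c} \<and> card (f w) = k') \<and> (\<forall>i. {w. i \<in> f w} \<in> sets borel)"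

end

theory Submission
  imports Defs
begin

text \<open>
  For the Gaussian shift from \<open>N(0, \<sigma>\<^sup>2 I)\<close> to \<open>N(\<delta>, \<sigma>\<^sup>2 I)\<close> the likelihood ratio is an
  increasing function of \<open>z \<bullet> \<delta>\<close>. By the Neyman--Pearson argument, among all test functions
  \<open>h\<close> with values in \<open>[0, 1]\<close> and prescribed Gaussian mean \<open>\<Phi>(q)\<close>, the indicator of a half-space
  orthogonal to \<open>\<delta>\<close> minimises (or, for the opposite half-space, maximises) the mean after the
  shift, and that mean is \<open>\<Phi>(q \<mp> \<parallel>\<delta>\<parallel>/\<sigma>)\<close>. Taking for \<open>h\<close> the indicator of the event
  \<open>i \<in> f(x + \<epsilon>)\<close> gives the label-wise bounds. Since \<open>f\<close> returns exactly \<open>k'\<close> labels, the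
  average \<open>(1/k') \<Sum>\<^sub>i\<^sub>\<in>\<^sub>\<Gamma> [i \<in> f(\<cdot>)]\<close> is again a test function with values in \<open>[0, 1]\<close>;
  this bounds \<open>\<Sum>\<^sub>i\<^sub>\<in>\<^sub>\<Gamma> p\<^sub>i\<^sup>*\<close>, and the maximum (minimum) over \<open>\<Gamma>\<close> is at least (at most)
  the average.
\<close>

section \<open>The standard normal distribution function\<close>

interpretation std_normal: real_distribution std_normal_distribution
  by (rule real_dist_normal_dist)

lemma Phi_eq_cdf: "Phi = cdf std_normal_distribution"
  by (simp add: fun_eq_iff Phi_def cdf_def2)

lemma isCont_Phi: "isCont Phi x"
proof -
  have "emeasure (std_normal_distribution) {x} = 0"
    by (subst emeasure_density) (auto intro!: nn_integral_null_set[of _ lborel, simplified])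
  then show ?thesis
    by (simp add: Phi_eq_cdf std_normal.isCont_cdf measure_def)
qed

lemma Phi_strict_mono: "strict_mono Phi"
proof
  fix a b :: real assume "a < b"
  then have "{a<..b} \<notin> null_sets lborel"
    by (simp add: null_sets_def)
  then have "\<not> (AE x in lborel. x \<notin> {a<..b})"
    by (subst AE_iff_null_sets[symmetric]) auto
  then have "\<not> (AE x in lborel. x \<in> {a<..b} \<longrightarrow> std_normal_density x = 0)"
    by (simp add: std_normal_density_def)
  then have "{a<..b} \<notin> null_sets (std_normal_distribution)"
    by (simp add: null_sets_density_iff)
  then have "0 < measure (std_normal_distribution) {a<..b}"
    by (simp add: std_normal.emeasure_eq_measure zero_less_measure_iff null_sets_def)
  with \<open>a < b\<close> show "Phi a < Phi b"
    by (simp add: Phi_eq_cdf std_normal.cdf_diff_eq[symmetric])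
qed

lemma Phi_at_top: "(Phi \<longlongrightarrow> 1) at_top"
  by (simp add: Phi_eq_cdf std_normal.cdf_lim_at_top_prob)

lemma Phi_at_bot: "(Phi \<longlongrightarrow> 0) at_bot"
  by (simp add: Phi_eq_cdf std_normal.cdf_lim_at_bot)

lemma Phi_inv_interior:
  assumes "0 < p" "p < 1"
  obtains q where "Phi_inv p = ereal q" "Phi q = p"
proof -
  obtain a where a: "Phi a < p"
    using order_tendstoD(2)[OF Phi_at_bot \<open>0 < p\<close>] by (meson eventually_at_bot_linorder order_refl)
  obtain b where b: "p < Phi b"
    using order_tendstoD(1)[OF Phi_at_top \<open>p < 1\<close>] by (meson eventually_at_top_linorder order_refl)
  have "a \<le> b"
    using a b strict_mono_less_eq[OF Phi_strict_mono, of b a] by linarith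
  then obtain q where q: "Phi q = p"
    using IVT[of Phi a p b] a b isCont_Phi less_imp_le by blast
  have "(THE q. Phi q = p) = q"
    by (rule the_equality) (use q strict_mono_eq[OF Phi_strict_mono] in auto)
  with q assms that show ?thesis
    by (simp add: Phi_inv_def)
qed

lemma Phi_nonneg: "0 \<le> Phi x"
  by (simp add: Phi_eq_cdf std_normal.cdf_nonneg)

lemma Phi_le_1: "Phi x \<le> 1"
  by (simp add: Phi_eq_cdf std_normal.cdf_bounded_prob)

lemma Phi_e_ereal [simp]: "Phi_e (ereal y) = Phi y"
  by (simp add: Phi_e_def)

text \<open>Quantifying over all \<open>q\<close> with \<open>\<Phi>(q) \<le> p\<close> instead of using \<open>\<Phi>\<^sup>-\<^sup>1(p)\<close> directly turns the
  boundary cases \<open>p = 0\<close> and \<open>p = 1\<close>, where \<open>\<Phi>\<^sup>-\<^sup>1(p) = \<mp>\<infinity>\<close>, into limits of \<open>\<Phi>\<close>.\<close>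

lemma Phi_e_Phi_inv_minus_le:
  assumes "0 \<le> p" "p \<le> 1" "0 \<le> y"
    and bound: "\<And>q. Phi q \<le> p \<Longrightarrow> Phi (q - d) \<le> y"
  shows "Phi_e (Phi_inv p - ereal d) \<le> y"
proof -
  consider "p = 0" | "p = 1" | "0 < p" "p < 1"
    using assms(1,2) by linarith
  then show ?thesis
  proof cases
    case 1
    with \<open>0 \<le> y\<close> show ?thesis
      by (simp add: Phi_inv_def Phi_e_def)
  next
    case 2
    have "Phi q \<le> y" for q
      using bound[of "q + d"] Phi_le_1[of "q + d"] 2 by simp
    then have "1 \<le> y"
      by (intro tendsto_le[OF trivial_limit_at_top_linorder tendsto_const Phi_at_top]) auto
    with 2 show ?thesis
      by (simp add: Phi_inv_def Phi_e_def)
  next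
    case 3
    then obtain q where "Phi_inv p = ereal q" "Phi q = p"
      by (rule Phi_inv_interior)
    with bound show ?thesis
      by simp
  qed
qed

lemma le_Phi_e_Phi_inv_plus:
  assumes "0 \<le> p" "p \<le> 1" "y \<le> 1"
    and bound: "\<And>q. p \<le> Phi q \<Longrightarrow> y \<le> Phi (q + d)"
  shows "y \<le> Phi_e (Phi_inv p + ereal d)"
proof -
  consider "p = 0" | "p = 1" | "0 < p" "p < 1"
    using assms(1,2) by linarith
  then show ?thesis
  proof cases
    case 1
    have "y \<le> Phi q" for q
      using bound[of "q - d"] Phi_nonneg[of "q - d"] 1 by simp
    then have "y \<le> 0"
      by (intro tendsto_le[OF trivial_limit_at_bot_linorder Phi_at_bot tendsto_const]) auto
    with 1 show ?thesis
      by (simp add: Phi_inv_def Phi_e_def)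
  next
    case 2
    with \<open>y \<le> 1\<close> show ?thesis
      by (simp add: Phi_inv_def Phi_e_def)
  next
    case 3
    then obtain q where "Phi_inv p = ereal q" "Phi q = p"
      by (rule Phi_inv_interior)
    with bound show ?thesis
      by simp
  qed
qed

section \<open>The isotropic Gaussian measure\<close>

definition iso_gauss_density :: "real \<Rightarrow> 'a::euclidean_space \<Rightarrow> real" where
  "iso_gauss_density \<sigma> z =
     (2 * pi * \<sigma>\<^sup>2) powr (- real DIM('a) / 2) * exp (- (norm z)\<^sup>2 / (2 * \<sigma>\<^sup>2))"

lemma iso_gauss_eq_density: "iso_gauss \<sigma> = density lborel (\<lambda>z. ennreal (iso_gauss_density \<sigma> z))"
  by (simp add: iso_gauss_def iso_gauss_density_def)

lemma iso_gauss_density_nonneg: "0 \<le> iso_gauss_density \<sigma> z"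
  by (simp add: iso_gauss_density_def)

lemma borel_measurable_iso_gauss_density [measurable]:
  "iso_gauss_density \<sigma> \<in> borel_measurable borel"
  unfolding iso_gauss_density_def[abs_def] by measurable

lemma space_iso_gauss [simp]: "space (iso_gauss \<sigma>) = UNIV"
  by (simp add: iso_gauss_def)

lemma sets_iso_gauss [simp]: "sets (iso_gauss \<sigma>) = sets borel"
  by (simp add: iso_gauss_def)

lemma norm_sum_Basis_sq:
  "(norm (\<Sum>b\<in>Basis. f b *\<^sub>R b :: 'a::euclidean_space))\<^sup>2 = (\<Sum>b\<in>Basis. (f b)\<^sup>2)"
proof -
  let ?v = "\<Sum>b\<in>Basis. f b *\<^sub>R b :: 'a"
  have "(norm ?v)\<^sup>2 = (\<Sum>b\<in>Basis. (?v \<bullet> b) * (?v \<bullet> b))"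
    by (simp add: power2_norm_eq_inner euclidean_inner[of ?v ?v])
  also have "\<dots> = (\<Sum>b\<in>Basis. (f b)\<^sup>2)"
    by (intro sum.cong) (auto simp: power2_eq_square)
  finally show ?thesis .
qed

lemma iso_gauss_density_sum_Basis:
  assumes "\<sigma> > 0"
  shows "iso_gauss_density \<sigma> (\<Sum>b\<in>Basis. f b *\<^sub>R b :: 'a::euclidean_space)
           = (\<Prod>b\<in>Basis. normal_density 0 \<sigma> (f b))"
proof -
  have root: "(1 / sqrt (2 * pi * \<sigma>\<^sup>2)) ^ n = (2 * pi * \<sigma>\<^sup>2) powr (- real n / 2)" for n
  proof -
    have "1 / sqrt (2 * pi * \<sigma>\<^sup>2) = (2 * pi * \<sigma>\<^sup>2) powr (- 1 / 2)"
      using assms by (simp add: powr_minus_divide powr_half_sqrt[symmetric])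
    then have "(1 / sqrt (2 * pi * \<sigma>\<^sup>2)) ^ n = ((2 * pi * \<sigma>\<^sup>2) powr (- 1 / 2)) powr real n"
      using assms by (simp add: powr_realpow)
    then show ?thesis
      by (simp add: powr_powr)
  qed
  have "(\<Prod>b\<in>Basis. normal_density 0 \<sigma> (f b)) =
     (\<Prod>b\<in>(Basis::'a set). 1 / sqrt (2 * pi * \<sigma>\<^sup>2)) * (\<Prod>b\<in>(Basis::'a set). exp (- (f b)\<^sup>2 / (2 * \<sigma>\<^sup>2)))"
    unfolding prod.distrib[symmetric] by (intro prod.cong) (simp_all add: normal_density_def)
  also have "\<dots> = (2 * pi * \<sigma>\<^sup>2) powr (- real DIM('a) / 2) * exp (- (\<Sum>b\<in>(Basis::'a set). (f b)\<^sup>2) / (2 * \<sigma>\<^sup>2))"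
    by (simp add: root exp_sum[symmetric] sum_divide_distrib sum_negf)
  finally show ?thesis
    by (simp add: iso_gauss_density_def norm_sum_Basis_sq)
qed

lemma density_PiM_lborel_prod:
  fixes g :: "real \<Rightarrow> real"
  assumes I: "finite I" and g: "prob_space (density lborel g)" "\<And>x. 0 \<le> g x"
    and [measurable]: "g \<in> borel_measurable borel"
  shows "density (\<Pi>\<^sub>M i\<in>I. lborel) (\<lambda>f. ennreal (\<Prod>i\<in>I. g (f i))) = (\<Pi>\<^sub>M i\<in>I. density lborel g)"
proof -
  let ?L = "\<Pi>\<^sub>M i\<in>I. (lborel :: real measure)"
  interpret P: product_prob_space "\<lambda>_. density lborel g"
    using g by (intro product_prob_spaceI)
  interpret L: product_sigma_finite "\<lambda>_. lborel :: real measure"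
    by standard
  show ?thesis
  proof (rule P.PiM_eqI)
    fix A assume A: "\<And>i. i \<in> I \<Longrightarrow> A i \<in> sets (density lborel g)"
    then have PiA: "Pi\<^sub>E I A \<in> sets ?L"
      using I by (intro sets_PiM_I_finite) auto
    have "emeasure (density ?L (\<lambda>f. ennreal (\<Prod>i\<in>I. g (f i)))) (Pi\<^sub>E I A)
        = (\<integral>\<^sup>+ f. ennreal (\<Prod>i\<in>I. g (f i)) * indicator (Pi\<^sub>E I A) f \<partial>?L)"
      using PiA by (simp add: emeasure_density)
    also have "\<dots> = (\<integral>\<^sup>+ f. (\<Prod>i\<in>I. ennreal (g (f i)) * indicator (A i) (f i)) \<partial>?L)"
    proof (intro nn_integral_cong)
      fix f assume "f \<in> space ?L"
      then have "indicator (Pi\<^sub>E I A) f = (\<Prod>i\<in>I. indicator (A i) (f i) :: ennreal)"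
        by (auto simp: space_PiM indicator_def PiE_def Pi_def prod_zero_iff I)
      then show "ennreal (\<Prod>i\<in>I. g (f i)) * indicator (Pi\<^sub>E I A) f
          = (\<Prod>i\<in>I. ennreal (g (f i)) * indicator (A i) (f i))"
        using g(2) by (simp add: prod.distrib prod_ennreal)
    qed
    also have "\<dots> = (\<Prod>i\<in>I. \<integral>\<^sup>+ x. ennreal (g x) * indicator (A i) x \<partial>lborel)"
      using A I by (subst L.product_nn_integral_prod) auto
    also have "\<dots> = (\<Prod>i\<in>I. emeasure (density lborel g) (A i))"
      using A by (intro prod.cong refl) (simp add: emeasure_density)
    finally show "emeasure (density ?L (\<lambda>f. ennreal (\<Prod>i\<in>I. g (f i)))) (Pi\<^sub>E I A)
        = (\<Prod>i\<in>I. emeasure (density lborel g) (A i))" .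
  qed (use I in \<open>auto intro!: sets_PiM_cong\<close>)
qed

lemma iso_gauss_eq_distr_PiM:
  assumes "\<sigma> > 0"
  shows "iso_gauss \<sigma> = distr (\<Pi>\<^sub>M b\<in>Basis. density lborel (normal_density 0 \<sigma>)) borel
           (\<lambda>f. \<Sum>b\<in>Basis. f b *\<^sub>R b :: 'a::euclidean_space)"
proof -
  let ?T = "\<lambda>f. \<Sum>b\<in>Basis. f b *\<^sub>R b :: 'a"
  have "iso_gauss \<sigma> = density (distr (\<Pi>\<^sub>M b\<in>Basis. lborel) borel ?T) (\<lambda>z. ennreal (iso_gauss_density \<sigma> z))"
    by (simp add: iso_gauss_eq_density lborel_eq[symmetric])
  also have "\<dots> = distr (density (\<Pi>\<^sub>M b\<in>Basis. lborel) (\<lambda>f. ennreal (iso_gauss_density \<sigma> (?T f)))) borel ?T"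
    by (intro density_distr) auto
  also have "density (\<Pi>\<^sub>M b\<in>Basis. lborel) (\<lambda>f. ennreal (iso_gauss_density \<sigma> (?T f)))
      = (\<Pi>\<^sub>M b\<in>Basis. density lborel (normal_density 0 \<sigma>))"
    using assms by (simp add: iso_gauss_density_sum_Basis density_PiM_lborel_prod prob_space_normal_density)
  finally show ?thesis .
qed

lemma prob_space_iso_gauss: "\<sigma> > 0 \<Longrightarrow> prob_space (iso_gauss \<sigma>)"
  by (simp add: iso_gauss_eq_distr_PiM prob_space_PiM prob_space_normal_density prob_space.prob_space_distr)

lemma indep_vars_PiM_components:
  assumes "I \<noteq> {}" and M: "\<And>i. i \<in> I \<Longrightarrow> prob_space (M i)"
  shows "prob_space.indep_vars (\<Pi>\<^sub>M i\<in>I. M i) M (\<lambda>i f. f i) I"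
proof -
  interpret prob_space "\<Pi>\<^sub>M i\<in>I. M i"
    using M by (rule prob_space_PiM)
  have "distr (\<Pi>\<^sub>M i\<in>I. M i) (\<Pi>\<^sub>M i\<in>I. M i) (\<lambda>f. \<lambda>i\<in>I. f i) = (\<Pi>\<^sub>M i\<in>I. M i)"
    by (subst distr_cong[where g = "\<lambda>f. f"]) (auto simp: space_PiM PiE_restrict distr_id2)
  also have "\<dots> = (\<Pi>\<^sub>M i\<in>I. distr (\<Pi>\<^sub>M i\<in>I. M i) (M i) (\<lambda>f. f i))"
    using M by (intro PiM_cong refl) (simp add: distr_PiM_component)
  finally show ?thesis
    using \<open>I \<noteq> {}\<close> by (subst indep_vars_iff_distr_eq_PiM') simp_all
qed

lemma distributed_PiM_normal_lincomb:
  fixes c :: "'i \<Rightarrow> real"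
  assumes I: "finite I" and \<sigma>: "\<sigma> > 0" and c: "\<exists>i\<in>I. c i \<noteq> 0"
  shows "distributed (\<Pi>\<^sub>M i\<in>I. density lborel (normal_density 0 \<sigma>)) lborel
           (\<lambda>f. \<Sum>i\<in>I. c i * f i) (normal_density 0 (\<sigma> * sqrt (\<Sum>i\<in>I. (c i)\<^sup>2)))"
proof -
  let ?N = "density lborel (normal_density 0 \<sigma>)"
  let ?P = "\<Pi>\<^sub>M i\<in>I. ?N"
  interpret prob_space ?P
    using \<sigma> by (intro prob_space_PiM prob_space_normal_density)
  define J where "J = {i\<in>I. c i \<noteq> 0}"
  have J: "finite J" "J \<noteq> {}" "J \<subseteq> I"
    using I c by (auto simp: J_def)
  have component: "distributed ?P lborel (\<lambda>f. f i) (normal_density 0 \<sigma>)" if "i \<in> I" for i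
  proof -
    have "distr ?P lborel (\<lambda>f. f i) = distr ?P ?N (\<lambda>f. f i)"
      by (rule distr_cong) simp_all
    also have "\<dots> = ?N"
      using that \<sigma> by (intro distr_PiM_component prob_space_normal_density)
    finally show ?thesis
      using that by (simp add: distributed_def)
  qed
  have "indep_vars (\<lambda>_. ?N) (\<lambda>i f. f i) J"
    using J \<sigma> by (intro indep_vars_subset[OF indep_vars_PiM_components]) (auto simp: prob_space_normal_density)
  then have indep: "indep_vars (\<lambda>_. borel) (\<lambda>i f. c i * f i) J"
    by (rule indep_vars_compose2[where Y = "\<lambda>i x. c i * x"])
       (subst measurable_cong_sets[OF sets_density refl], simp)
  have scaled: "distributed ?P lborel (\<lambda>f. c i * f i) (normal_density 0 (\<bar>c i\<bar> * \<sigma>))" if "i \<in> J" for i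
    using normal_density_affine[OF component \<sigma>, of i "c i" 0] that by (simp add: J_def)
  have "distributed ?P lborel (\<lambda>f. \<Sum>i\<in>J. c i * f i)
      (normal_density (\<Sum>i\<in>J. 0) (sqrt (\<Sum>i\<in>J. (\<bar>c i\<bar> * \<sigma>)\<^sup>2)))"
    using \<sigma> scaled by (intro sum_indep_normal[OF J(1,2) indep]) (auto simp: J_def)
  moreover have "(\<Sum>i\<in>J. c i * f i) = (\<Sum>i\<in>I. c i * f i)" for f
    using I by (intro sum.mono_neutral_left) (auto simp: J_def)
  moreover have "sqrt (\<Sum>i\<in>J. (\<bar>c i\<bar> * \<sigma>)\<^sup>2) = \<sigma> * sqrt (\<Sum>i\<in>I. (c i)\<^sup>2)"
  proof -
    have "(\<Sum>i\<in>J. (\<bar>c i\<bar> * \<sigma>)\<^sup>2) = \<sigma>\<^sup>2 * (\<Sum>i\<in>J. (c i)\<^sup>2)"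
      by (simp add: power_mult_distrib sum_distrib_left mult.commute)
    also have "(\<Sum>i\<in>J. (c i)\<^sup>2) = (\<Sum>i\<in>I. (c i)\<^sup>2)"
      using I by (intro sum.mono_neutral_left) (auto simp: J_def)
    finally show ?thesis
      using \<sigma> by (simp add: real_sqrt_mult)
  qed
  ultimately show ?thesis
    by simp
qed

lemma distributed_iso_gauss_inner:
  fixes w :: "'a::euclidean_space"
  assumes \<sigma>: "\<sigma> > 0" and w: "w \<noteq> 0"
  shows "distributed (iso_gauss \<sigma>) lborel (\<lambda>e. e \<bullet> w) (normal_density 0 (\<sigma> * norm w))"
proof -
  let ?P = "\<Pi>\<^sub>M b\<in>Basis. density lborel (normal_density 0 \<sigma>)"
  let ?T = "\<lambda>f. \<Sum>b\<in>Basis. f b *\<^sub>R b :: 'a"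
  have "\<exists>b\<in>Basis. b \<bullet> w \<noteq> 0"
    using w euclidean_all_zero_iff[of w] by (auto simp: inner_commute)
  moreover have "sqrt (\<Sum>b\<in>Basis. (b \<bullet> w)\<^sup>2) = norm w"
    by (simp add: norm_eq_sqrt_inner euclidean_inner[of w w] power2_eq_square inner_commute)
  ultimately have "distributed ?P lborel (\<lambda>f. \<Sum>b\<in>Basis. (b \<bullet> w) * f b) (normal_density 0 (\<sigma> * norm w))"
    using distributed_PiM_normal_lincomb[OF finite_Basis \<sigma>, of "\<lambda>b. b \<bullet> w"] by simp
  moreover have "?T f \<bullet> w = (\<Sum>b\<in>Basis. (b \<bullet> w) * f b)" for f
    by (simp add: inner_sum_left mult.commute)
  moreover have "?T \<in> measurable ?P borel"
    by measurable
  ultimately show ?thesis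
    using \<sigma> by (simp add: iso_gauss_eq_distr_PiM distributed_def distr_distr comp_def)
qed

lemma measure_normal_le:
  assumes M: "prob_space M" and X: "distributed M lborel X (normal_density 0 s)" and s: "0 < s"
  shows "measure M {x\<in>space M. X x \<le> t} = Phi (t / s)"
proof -
  interpret prob_space M
    by (rule M)
  have Z: "distributed M lborel (\<lambda>x. X x / s) std_normal_density"
    using X s normal_standard_normal_convert[of s X 0] by simp
  have "{x\<in>space M. X x \<le> t} = (\<lambda>x. X x / s) -` {..t / s} \<inter> space M"
    using s by (auto simp: field_simps)
  also have "measure M \<dots> = measure (distr M lborel (\<lambda>x. X x / s)) {..t / s}"
    using Z by (intro measure_distr[symmetric]) (auto simp: distributed_def)
  also have "\<dots> = Phi (t / s)"
    using Z by (simp add: distributed_def Phi_def)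
  finally show ?thesis .
qed

lemma measure_iso_gauss_halfspace:
  fixes w :: "'a::euclidean_space"
  assumes "\<sigma> > 0" "w \<noteq> 0"
  shows "measure (iso_gauss \<sigma>) {e. e \<bullet> w \<le> t} = Phi (t / (\<sigma> * norm w))"
  using measure_normal_le[OF prob_space_iso_gauss[OF assms(1)] distributed_iso_gauss_inner[OF assms]] assms
  by simp

section \<open>Neyman--Pearson bounds for a Gaussian shift\<close>

lemma integral_iso_gauss:
  fixes h :: "'a::euclidean_space \<Rightarrow> real"
  assumes [measurable]: "h \<in> borel_measurable borel"
  shows "integral\<^sup>L (iso_gauss \<sigma>) h = (\<integral>z. iso_gauss_density \<sigma> z * h z \<partial>lborel)"
  unfolding iso_gauss_eq_density by (subst integral_density) (auto simp: iso_gauss_density_nonneg)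

lemma integral_iso_gauss_shift:
  fixes h :: "'a::euclidean_space \<Rightarrow> real"
  assumes [measurable]: "h \<in> borel_measurable borel"
  shows "(\<integral>e. h (\<delta> + e) \<partial>iso_gauss \<sigma>) = (\<integral>z. iso_gauss_density \<sigma> (z - \<delta>) * h z \<partial>lborel)"
proof -
  have "(\<integral>e. h (\<delta> + e) \<partial>iso_gauss \<sigma>) = (\<integral>e. iso_gauss_density \<sigma> e * h (\<delta> + e) \<partial>lborel)"
    by (rule integral_iso_gauss) measurable
  also have "\<dots> = (\<integral>z. iso_gauss_density \<sigma> (z - \<delta>) * h z \<partial>distr lborel borel ((+) \<delta>))"
    by (subst integral_distr) auto
  finally show ?thesis
    by (simp add: lborel_distr_plus)
qed

lemma integrable_iso_gauss_density:
  assumes "\<sigma> > 0"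
  shows "integrable lborel (iso_gauss_density \<sigma> :: 'a::euclidean_space \<Rightarrow> real)"
proof -
  interpret prob_space "iso_gauss \<sigma> :: 'a measure"
    using assms by (rule prob_space_iso_gauss)
  have "integrable (iso_gauss \<sigma> :: 'a measure) (\<lambda>_. 1::real)"
    by simp
  then show ?thesis
    by (simp add: iso_gauss_eq_density integrable_density iso_gauss_density_nonneg)
qed

lemma integrable_iso_gauss_density_shift:
  fixes \<delta> :: "'a::euclidean_space"
  assumes "\<sigma> > 0"
  shows "integrable lborel (\<lambda>z. iso_gauss_density \<sigma> (z - \<delta>))"
proof -
  have "integrable (distr lborel borel ((+) \<delta>)) (\<lambda>z. iso_gauss_density \<sigma> (z - \<delta>))"
    by (subst integrable_distr_eq) (auto simp: integrable_iso_gauss_density[OF assms])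
  then show ?thesis
    by (simp add: lborel_distr_plus)
qed

lemma integrable_iso_gauss_bounded:
  fixes h :: "'a::euclidean_space \<Rightarrow> real"
  assumes "\<sigma> > 0" and [measurable]: "h \<in> borel_measurable borel" and "\<And>z. \<bar>h z\<bar> \<le> B"
  shows "integrable (iso_gauss \<sigma>) h"
proof -
  interpret prob_space "iso_gauss \<sigma> :: 'a measure"
    using assms(1) by (rule prob_space_iso_gauss)
  have "h \<in> borel_measurable (iso_gauss \<sigma>)"
    by (simp add: measurable_cong_sets[OF sets_iso_gauss refl])
  then show ?thesis
    using assms(3) by (intro integrable_const_bound[where B = B]) auto
qed

lemma iso_gauss_density_shift:
  fixes z \<delta> :: "'a::euclidean_space"
  shows "iso_gauss_density \<sigma> (z - \<delta>)
           = iso_gauss_density \<sigma> z * exp ((2 * (z \<bullet> \<delta>) - (norm \<delta>)\<^sup>2) / (2 * \<sigma>\<^sup>2))"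
proof -
  have "- (norm (z - \<delta>))\<^sup>2 = - (norm z)\<^sup>2 + (2 * (z \<bullet> \<delta>) - (norm \<delta>)\<^sup>2)"
    by (simp add: power2_norm_eq_inner inner_diff inner_commute)
  then have "- (norm (z - \<delta>))\<^sup>2 / (2 * \<sigma>\<^sup>2)
      = - (norm z)\<^sup>2 / (2 * \<sigma>\<^sup>2) + (2 * (z \<bullet> \<delta>) - (norm \<delta>)\<^sup>2) / (2 * \<sigma>\<^sup>2)"
    by (simp only: add_divide_distrib)
  then show ?thesis
    unfolding iso_gauss_density_def by (simp only: exp_add mult.assoc)
qed

lemma iso_gauss_density_shift_sign:
  fixes z \<delta> :: "'a::euclidean_space"
  shows "t \<le> z \<bullet> \<delta> \<Longrightarrow>
           0 \<le> iso_gauss_density \<sigma> (z - \<delta>) - exp ((2 * t - (norm \<delta>)\<^sup>2) / (2 * \<sigma>\<^sup>2)) * iso_gauss_density \<sigma> z"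
    and "z \<bullet> \<delta> \<le> t \<Longrightarrow>
           iso_gauss_density \<sigma> (z - \<delta>) - exp ((2 * t - (norm \<delta>)\<^sup>2) / (2 * \<sigma>\<^sup>2)) * iso_gauss_density \<sigma> z \<le> 0"
proof -
  have diff: "iso_gauss_density \<sigma> (z - \<delta>) - exp ((2 * t - (norm \<delta>)\<^sup>2) / (2 * \<sigma>\<^sup>2)) * iso_gauss_density \<sigma> z
      = iso_gauss_density \<sigma> z * (exp ((2 * (z \<bullet> \<delta>) - (norm \<delta>)\<^sup>2) / (2 * \<sigma>\<^sup>2))
                                  - exp ((2 * t - (norm \<delta>)\<^sup>2) / (2 * \<sigma>\<^sup>2)))"
    by (simp add: iso_gauss_density_shift algebra_simps)
  have mono: "exp ((2 * a - (norm \<delta>)\<^sup>2) / (2 * \<sigma>\<^sup>2)) \<le> exp ((2 * b - (norm \<delta>)\<^sup>2) / (2 * \<sigma>\<^sup>2))"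
    if "a \<le> b" for a b
    using that by (intro exp_mono divide_right_mono) auto
  show "t \<le> z \<bullet> \<delta> \<Longrightarrow> 0 \<le> iso_gauss_density \<sigma> (z - \<delta>) - exp ((2 * t - (norm \<delta>)\<^sup>2) / (2 * \<sigma>\<^sup>2)) * iso_gauss_density \<sigma> z"
    unfolding diff using mono by (intro mult_nonneg_nonneg iso_gauss_density_nonneg) auto
  show "z \<bullet> \<delta> \<le> t \<Longrightarrow> iso_gauss_density \<sigma> (z - \<delta>) - exp ((2 * t - (norm \<delta>)\<^sup>2) / (2 * \<sigma>\<^sup>2)) * iso_gauss_density \<sigma> z \<le> 0"
    unfolding diff using mono by (intro mult_nonneg_nonpos iso_gauss_density_nonneg) auto
qed

lemma neyman_pearson_integral:
  fixes M :: "'a measure" and f0 f1 g h :: "'a \<Rightarrow> real"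
  assumes int: "integrable M f0" "integrable M f1"
    and [measurable]: "g \<in> borel_measurable M" "h \<in> borel_measurable M"
    and bounded: "\<And>x. \<bar>g x\<bar> \<le> 1" "\<And>x. \<bar>h x\<bar> \<le> 1"
    and l: "0 \<le> l" and sign: "\<And>x. 0 \<le> (g x - h x) * (f1 x - l * f0 x)"
    and size: "(\<integral>x. f0 x * h x \<partial>M) \<le> (\<integral>x. f0 x * g x \<partial>M)"
  shows "(\<integral>x. f1 x * h x \<partial>M) \<le> (\<integral>x. f1 x * g x \<partial>M)"
proof -
  have weighted: "integrable M (\<lambda>x. f x * u x)"
    if "integrable M f" "u \<in> borel_measurable M" "\<And>x. \<bar>u x\<bar> \<le> 1" for f u :: "'a \<Rightarrow> real"
    using that by (intro Bochner_Integration.integrable_bound[OF that(1)])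
      (auto simp: abs_mult intro!: mult_left_le)
  have expand: "(\<lambda>x. (g x - h x) * (f1 x - l * f0 x))
      = (\<lambda>x. (f1 x * g x - f1 x * h x) - l * (f0 x * g x - f0 x * h x))"
    by (auto simp: algebra_simps)
  have "0 \<le> (\<integral>x. (g x - h x) * (f1 x - l * f0 x) \<partial>M)"
    using sign by (simp add: integral_nonneg_AE)
  also have "\<dots> = ((\<integral>x. f1 x * g x \<partial>M) - (\<integral>x. f1 x * h x \<partial>M))
                  - l * ((\<integral>x. f0 x * g x \<partial>M) - (\<integral>x. f0 x * h x \<partial>M))"
    unfolding expand using weighted[OF int(1)] weighted[OF int(2)] bounded
    by (simp add: integral_diff)
  finally have "0 \<le> ((\<integral>x. f1 x * g x \<partial>M) - (\<integral>x. f1 x * h x \<partial>M))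
                  - l * ((\<integral>x. f0 x * g x \<partial>M) - (\<integral>x. f0 x * h x \<partial>M))" .
  moreover have "0 \<le> l * ((\<integral>x. f0 x * g x \<partial>M) - (\<integral>x. f0 x * h x \<partial>M))"
    using l size by simp
  ultimately show ?thesis
    by linarith
qed

lemma iso_gauss_shift_neyman_pearson:
  fixes g h :: "'a::euclidean_space \<Rightarrow> real" and \<delta> :: 'a
  assumes \<sigma>: "\<sigma> > 0" and [measurable]: "g \<in> borel_measurable borel" "h \<in> borel_measurable borel"
    and bounded: "\<And>z. \<bar>g z\<bar> \<le> 1" "\<And>z. \<bar>h z\<bar> \<le> 1" and l: "0 \<le> l"
    and sign: "\<And>z. 0 \<le> (g z - h z) * (iso_gauss_density \<sigma> (z - \<delta>) - l * iso_gauss_density \<sigma> z)"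
    and size: "integral\<^sup>L (iso_gauss \<sigma>) h \<le> integral\<^sup>L (iso_gauss \<sigma>) g"
  shows "(\<integral>e. h (\<delta> + e) \<partial>iso_gauss \<sigma>) \<le> (\<integral>e. g (\<delta> + e) \<partial>iso_gauss \<sigma>)"
proof -
  have "(\<integral>z. iso_gauss_density \<sigma> z * h z \<partial>lborel) \<le> (\<integral>z. iso_gauss_density \<sigma> z * g z \<partial>lborel)"
    using size by (simp add: integral_iso_gauss)
  then have "(\<integral>z. iso_gauss_density \<sigma> (z - \<delta>) * h z \<partial>lborel) \<le> (\<integral>z. iso_gauss_density \<sigma> (z - \<delta>) * g z \<partial>lborel)"
    by (intro neyman_pearson_integral[OF integrable_iso_gauss_density[OF \<sigma>]
          integrable_iso_gauss_density_shift[OF \<sigma>] _ _ bounded l sign]) simp_all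
  then show ?thesis
    by (simp add: integral_iso_gauss_shift)
qed

lemma minus_indicator_mult_nonneg:
  fixes x a :: real
  assumes "0 \<le> x" "x \<le> 1" "z \<in> S \<Longrightarrow> a \<le> 0" "z \<notin> S \<Longrightarrow> 0 \<le> a"
  shows "0 \<le> (x - indicator S z) * a"
  using assms by (cases "z \<in> S") (auto intro: mult_nonpos_nonpos)

lemma iso_gauss_shift_lower_Phi:
  fixes h :: "'a::euclidean_space \<Rightarrow> real"
  assumes \<sigma>: "\<sigma> > 0" and [measurable]: "h \<in> borel_measurable borel"
    and h: "\<And>z. 0 \<le> h z" "\<And>z. h z \<le> 1"
    and q: "Phi q \<le> integral\<^sup>L (iso_gauss \<sigma>) h"
  shows "Phi (q - norm \<delta> / \<sigma>) \<le> (\<integral>e. h (\<delta> + e) \<partial>iso_gauss \<sigma>)"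
proof (cases "\<delta> = 0")
  case True
  with q show ?thesis
    by simp
next
  case False
  define r where "r = norm \<delta>"
  define t where "t = \<sigma> * r * q"
  define H where "H = {z::'a. z \<bullet> \<delta> \<le> t}"
  have r: "r > 0"
    using False by (simp add: r_def)
  have [measurable]: "H \<in> sets borel"
    unfolding H_def by measurable
  have sign: "0 \<le> (h z - indicator H z) *
      (iso_gauss_density \<sigma> (z - \<delta>) - exp ((2 * t - r\<^sup>2) / (2 * \<sigma>\<^sup>2)) * iso_gauss_density \<sigma> z)" for z
    using h iso_gauss_density_shift_sign[where t = t and z = z and \<delta> = \<delta> and \<sigma> = \<sigma>]
    by (intro minus_indicator_mult_nonneg) (auto simp: H_def r_def)
  have "measure (iso_gauss \<sigma>) H = Phi q"
    using measure_iso_gauss_halfspace[OF \<sigma> False, of t] \<sigma> r by (simp add: H_def t_def r_def)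
  then have "(\<integral>e. indicator H (\<delta> + e) \<partial>iso_gauss \<sigma>) \<le> (\<integral>e. h (\<delta> + e) \<partial>iso_gauss \<sigma>)"
    using q h sign
    by (intro iso_gauss_shift_neyman_pearson[OF \<sigma>, where l = "exp ((2 * t - r\<^sup>2) / (2 * \<sigma>\<^sup>2))"]) auto
  moreover have "(\<lambda>e. indicator H (\<delta> + e) :: real) = indicator {e. e \<bullet> \<delta> \<le> t - r\<^sup>2}"
    by (auto simp: H_def inner_add_left r_def power2_norm_eq_inner split: split_indicator)
  moreover have "(t - r\<^sup>2) / (\<sigma> * r) = q - r / \<sigma>"
    using \<sigma> r by (simp add: t_def field_simps power2_eq_square)
  ultimately show ?thesis
    using measure_iso_gauss_halfspace[OF \<sigma> False, of "t - r\<^sup>2"] by (simp add: r_def)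
qed

lemma iso_gauss_shift_upper_Phi:
  fixes h :: "'a::euclidean_space \<Rightarrow> real"
  assumes \<sigma>: "\<sigma> > 0" and [measurable]: "h \<in> borel_measurable borel"
    and h: "\<And>z. 0 \<le> h z" "\<And>z. h z \<le> 1"
    and q: "integral\<^sup>L (iso_gauss \<sigma>) h \<le> Phi q"
  shows "(\<integral>e. h (\<delta> + e) \<partial>iso_gauss \<sigma>) \<le> Phi (q + norm \<delta> / \<sigma>)"
proof (cases "\<delta> = 0")
  case True
  with q show ?thesis
    by simp
next
  case False
  define r where "r = norm \<delta>"
  define t where "t = \<sigma> * r * q"
  define K where "K = {z::'a. z \<bullet> (- \<delta>) \<le> t}"
  have r: "r > 0"
    using False by (simp add: r_def)
  have [measurable]: "K \<in> sets borel"
    unfolding K_def by measurable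
  have sign: "0 \<le> (indicator K z - h z) *
      (iso_gauss_density \<sigma> (z - \<delta>) - exp ((2 * (- t) - r\<^sup>2) / (2 * \<sigma>\<^sup>2)) * iso_gauss_density \<sigma> z)" for z
  proof -
    have "0 \<le> (h z - indicator K z) *
        - (iso_gauss_density \<sigma> (z - \<delta>) - exp ((2 * (- t) - r\<^sup>2) / (2 * \<sigma>\<^sup>2)) * iso_gauss_density \<sigma> z)"
      using h iso_gauss_density_shift_sign[where t = "- t" and z = z and \<delta> = \<delta> and \<sigma> = \<sigma>]
      by (intro minus_indicator_mult_nonneg) (auto simp: K_def r_def)
    then show ?thesis
      by (simp add: algebra_simps)
  qed
  have "measure (iso_gauss \<sigma>) K = Phi q"
    using measure_iso_gauss_halfspace[OF \<sigma>, of "- \<delta>" t] False \<sigma> r by (simp add: K_def t_def r_def)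
  then have "(\<integral>e. h (\<delta> + e) \<partial>iso_gauss \<sigma>) \<le> (\<integral>e. indicator K (\<delta> + e) \<partial>iso_gauss \<sigma>)"
    using q h sign
    by (intro iso_gauss_shift_neyman_pearson[OF \<sigma>, where l = "exp ((2 * (- t) - r\<^sup>2) / (2 * \<sigma>\<^sup>2))"]) auto
  moreover have "(\<lambda>e. indicator K (\<delta> + e) :: real) = indicator {e. e \<bullet> (- \<delta>) \<le> t + r\<^sup>2}"
    by (auto simp: K_def inner_add_left r_def power2_norm_eq_inner split: split_indicator)
  moreover have "(t + r\<^sup>2) / (\<sigma> * r) = q + r / \<sigma>"
    using \<sigma> r by (simp add: t_def field_simps power2_eq_square)
  ultimately show ?thesis
    using measure_iso_gauss_halfspace[OF \<sigma>, of "- \<delta>" "t + r\<^sup>2"] False by (simp add: r_def)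
qed

lemma integral_iso_gauss_le_1:
  fixes h :: "'a::euclidean_space \<Rightarrow> real"
  assumes "\<sigma> > 0" "h \<in> borel_measurable borel" "\<And>z. 0 \<le> h z" "\<And>z. h z \<le> 1"
  shows "integral\<^sup>L (iso_gauss \<sigma>) h \<le> 1"
proof -
  interpret prob_space "iso_gauss \<sigma> :: 'a measure"
    using assms(1) by (rule prob_space_iso_gauss)
  show ?thesis
    using assms by (intro integral_le_const integrable_iso_gauss_bounded[where B = 1]) auto
qed

lemma iso_gauss_shift_lower:
  fixes h :: "'a::euclidean_space \<Rightarrow> real"
  assumes \<sigma>: "\<sigma> > 0" and [measurable]: "h \<in> borel_measurable borel"
    and h: "\<And>z. 0 \<le> h z" "\<And>z. h z \<le> 1"
    and p: "0 \<le> p" "p \<le> 1" "p \<le> integral\<^sup>L (iso_gauss \<sigma>) h"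
  shows "Phi_e (Phi_inv p - ereal (norm \<delta> / \<sigma>)) \<le> (\<integral>e. h (\<delta> + e) \<partial>iso_gauss \<sigma>)"
proof (rule Phi_e_Phi_inv_minus_le[OF p(1,2)])
  show "0 \<le> (\<integral>e. h (\<delta> + e) \<partial>iso_gauss \<sigma>)"
    using h by simp
  show "Phi (q - norm \<delta> / \<sigma>) \<le> (\<integral>e. h (\<delta> + e) \<partial>iso_gauss \<sigma>)" if "Phi q \<le> p" for q
    using that p(3) h by (intro iso_gauss_shift_lower_Phi[OF \<sigma>]) auto
qed

lemma iso_gauss_shift_upper:
  fixes h :: "'a::euclidean_space \<Rightarrow> real"
  assumes \<sigma>: "\<sigma> > 0" and [measurable]: "h \<in> borel_measurable borel"
    and h: "\<And>z. 0 \<le> h z" "\<And>z. h z \<le> 1"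
    and p: "0 \<le> p" "p \<le> 1" "integral\<^sup>L (iso_gauss \<sigma>) h \<le> p"
  shows "(\<integral>e. h (\<delta> + e) \<partial>iso_gauss \<sigma>) \<le> Phi_e (Phi_inv p + ereal (norm \<delta> / \<sigma>))"
proof (rule le_Phi_e_Phi_inv_plus[OF p(1,2)])
  show "(\<integral>e. h (\<delta> + e) \<partial>iso_gauss \<sigma>) \<le> 1"
    using h by (intro integral_iso_gauss_le_1[OF \<sigma>]) auto
  show "(\<integral>e. h (\<delta> + e) \<partial>iso_gauss \<sigma>) \<le> Phi (q + norm \<delta> / \<sigma>)" if "p \<le> Phi q" for q
    using that p(3) h by (intro iso_gauss_shift_upper_Phi[OF \<sigma>]) auto
qed

lemma integral_iso_gauss_sum:
  fixes h :: "'i \<Rightarrow> 'a::euclidean_space \<Rightarrow> real"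
  assumes \<sigma>: "\<sigma> > 0" and I: "finite I"
    and [measurable]: "\<And>i. i \<in> I \<Longrightarrow> h i \<in> borel_measurable borel"
    and h: "\<And>i z. i \<in> I \<Longrightarrow> 0 \<le> h i z" "\<And>z. (\<Sum>i\<in>I. h i z) \<le> k"
  shows "(\<integral>e. (\<Sum>i\<in>I. h i e) \<partial>iso_gauss \<sigma>) = (\<Sum>i\<in>I. integral\<^sup>L (iso_gauss \<sigma>) (h i))"
proof (rule Bochner_Integration.integral_sum)
  fix i assume i: "i \<in> I"
  have "\<bar>h i z\<bar> \<le> k" for z
    using member_le_sum[OF i, of "\<lambda>i. h i z"] h i I by (simp add: order_trans[OF _ h(2)])
  then show "integrable (iso_gauss \<sigma>) (h i)"
    using i by (intro integrable_iso_gauss_bounded[OF \<sigma>, where B = k]) auto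
qed

lemma iso_gauss_shift_sum_lower:
  fixes h :: "'i \<Rightarrow> 'a::euclidean_space \<Rightarrow> real"
  assumes \<sigma>: "\<sigma> > 0" and I: "finite I"
    and [measurable]: "\<And>i. i \<in> I \<Longrightarrow> h i \<in> borel_measurable borel"
    and h: "\<And>i z. i \<in> I \<Longrightarrow> 0 \<le> h i z" "\<And>z. (\<Sum>i\<in>I. h i z) \<le> k"
    and p: "\<And>i. i \<in> I \<Longrightarrow> 0 \<le> p i" "\<And>i. i \<in> I \<Longrightarrow> p i \<le> integral\<^sup>L (iso_gauss \<sigma>) (h i)"
    and p_sum: "(\<Sum>i\<in>I. p i) \<le> k"
  shows "k * Phi_e (Phi_inv ((\<Sum>i\<in>I. p i) / k) - ereal (norm \<delta> / \<sigma>))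
           \<le> (\<Sum>i\<in>I. \<integral>e. h i (\<delta> + e) \<partial>iso_gauss \<sigma>)"
proof (cases "k = 0")
  case True
  then show ?thesis
    using h(1) by (simp add: sum_nonneg)
next
  case False
  then have k: "k > 0"
    using h(2)[of 0] sum_nonneg[of I "\<lambda>i. h i 0"] h(1) by force
  define H where "H z = (\<Sum>i\<in>I. h i z) / k" for z
  have [measurable]: "H \<in> borel_measurable borel"
    unfolding H_def by measurable
  have H: "0 \<le> H z" "H z \<le> 1" for z
    using h k by (simp_all add: H_def sum_nonneg)
  have int_sum: "(\<integral>e. (\<Sum>i\<in>I. h i (y + e)) \<partial>iso_gauss \<sigma>) = (\<Sum>i\<in>I. \<integral>e. h i (y + e) \<partial>iso_gauss \<sigma>)" for y
    using h by (intro integral_iso_gauss_sum[OF \<sigma> I, where k = k]) auto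
  have "integral\<^sup>L (iso_gauss \<sigma>) H = (\<Sum>i\<in>I. integral\<^sup>L (iso_gauss \<sigma>) (h i)) / k"
    using int_sum[of 0] by (simp add: H_def[abs_def])
  then have "(\<Sum>i\<in>I. p i) / k \<le> integral\<^sup>L (iso_gauss \<sigma>) H"
    using p(2) k by (simp add: sum_mono divide_right_mono)
  then have "Phi_e (Phi_inv ((\<Sum>i\<in>I. p i) / k) - ereal (norm \<delta> / \<sigma>)) \<le> (\<integral>e. H (\<delta> + e) \<partial>iso_gauss \<sigma>)"
    using k p p_sum H by (intro iso_gauss_shift_lower[OF \<sigma>]) (auto simp: sum_nonneg)
  also have "\<dots> = (\<Sum>i\<in>I. \<integral>e. h i (\<delta> + e) \<partial>iso_gauss \<sigma>) / k"
    using int_sum[of \<delta>] by (simp add: H_def)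
  finally show ?thesis
    using k by (simp add: field_simps)
qed

lemma iso_gauss_shift_sum_upper:
  fixes h :: "'i \<Rightarrow> 'a::euclidean_space \<Rightarrow> real"
  assumes \<sigma>: "\<sigma> > 0" and I: "finite I"
    and [measurable]: "\<And>i. i \<in> I \<Longrightarrow> h i \<in> borel_measurable borel"
    and h: "\<And>i z. i \<in> I \<Longrightarrow> 0 \<le> h i z" "\<And>z. (\<Sum>i\<in>I. h i z) \<le> k"
    and p: "\<And>i. i \<in> I \<Longrightarrow> integral\<^sup>L (iso_gauss \<sigma>) (h i) \<le> p i"
    and p_sum: "(\<Sum>i\<in>I. p i) \<le> k"
  shows "(\<Sum>i\<in>I. \<integral>e. h i (\<delta> + e) \<partial>iso_gauss \<sigma>)
           \<le> k * Phi_e (Phi_inv ((\<Sum>i\<in>I. p i) / k) + ereal (norm \<delta> / \<sigma>))"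
proof (cases "k = 0")
  case True
  then have "h i z = 0" if "i \<in> I" for i z
    using h sum_nonneg_eq_0_iff[OF I, of "\<lambda>i. h i z"] that by (metis antisym sum_nonneg)
  with True show ?thesis
    by simp
next
  case False
  then have k: "k > 0"
    using h(2)[of 0] sum_nonneg[of I "\<lambda>i. h i 0"] h(1) by force
  define H where "H z = (\<Sum>i\<in>I. h i z) / k" for z
  have [measurable]: "H \<in> borel_measurable borel"
    unfolding H_def by measurable
  have H: "0 \<le> H z" "H z \<le> 1" for z
    using h k by (simp_all add: H_def sum_nonneg)
  have int_sum: "(\<integral>e. (\<Sum>i\<in>I. h i (y + e)) \<partial>iso_gauss \<sigma>) = (\<Sum>i\<in>I. \<integral>e. h i (y + e) \<partial>iso_gauss \<sigma>)" for y
    using h by (intro integral_iso_gauss_sum[OF \<sigma> I, where k = k]) auto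
  have "integral\<^sup>L (iso_gauss \<sigma>) H = (\<Sum>i\<in>I. integral\<^sup>L (iso_gauss \<sigma>) (h i)) / k"
    using int_sum[of 0] by (simp add: H_def[abs_def])
  then have size: "integral\<^sup>L (iso_gauss \<sigma>) H \<le> (\<Sum>i\<in>I. p i) / k"
    using p k by (simp add: sum_mono divide_right_mono)
  moreover have "0 \<le> integral\<^sup>L (iso_gauss \<sigma>) H"
    using H by simp
  ultimately have "0 \<le> (\<Sum>i\<in>I. p i) / k"
    by linarith
  then have "(\<integral>e. H (\<delta> + e) \<partial>iso_gauss \<sigma>) \<le> Phi_e (Phi_inv ((\<Sum>i\<in>I. p i) / k) + ereal (norm \<delta> / \<sigma>))"
    using k p_sum H size by (intro iso_gauss_shift_upper[OF \<sigma>]) auto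
  moreover have "(\<Sum>i\<in>I. \<integral>e. h i (\<delta> + e) \<partial>iso_gauss \<sigma>) = k * (\<integral>e. H (\<delta> + e) \<partial>iso_gauss \<sigma>)"
    using int_sum[of \<delta>] k by (simp add: H_def)
  ultimately show ?thesis
    using k by (simp add: mult_left_mono)
qed

section \<open>Smoothed multi-label classifiers\<close>

lemma sets_multilabel_classifier_label:
  "multilabel_classifier c k' f \<Longrightarrow> {w. i \<in> f w} \<in> sets borel"
  by (simp add: multilabel_classifier_def)

lemma multilabel_classifier_label_count:
  assumes f: "multilabel_classifier c k' f" and \<Gamma>: "finite \<Gamma>"
  shows "(\<Sum>i\<in>\<Gamma>. indicator {w. i \<in> f w} z :: real) \<le> real k'"
proof -
  have "(\<Sum>i\<in>\<Gamma>. indicator {w. i \<in> f w} z :: real) = real (card (\<Gamma> \<inter> f z))"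
    using \<Gamma> by (simp add: indicator_def sum.If_cases Int_def)
  also have "card (\<Gamma> \<inter> f z) \<le> card (f z)"
    using f by (intro card_mono) (auto simp: multilabel_classifier_def intro: finite_subset)
  also have "card (f z) = k'"
    using f by (simp add: multilabel_classifier_def)
  finally show ?thesis
    by simp
qed

lemma integral_iso_gauss_indicator_shift:
  "(\<integral>e. indicator A (y + e) \<partial>iso_gauss \<sigma>) = measure (iso_gauss \<sigma>) {e. y + e \<in> A}"
proof -
  have "(\<lambda>e. indicator A (y + e) :: real) = indicator {e. y + e \<in> A}"
    by (auto split: split_indicator)
  then show ?thesis
    by simp
qed

lemma multilabel_smoothing_lower:
  fixes f :: "'a::euclidean_space \<Rightarrow> nat set"
  assumes f: "multilabel_classifier c k' f" and \<sigma>: "\<sigma> > 0" and \<Gamma>: "finite \<Gamma>" "\<Gamma> \<noteq> {}"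
    and pl: "\<And>i. i \<in> \<Gamma> \<Longrightarrow> 0 \<le> pl i \<and> pl i \<le> 1"
    and pl_le: "\<And>i. i \<in> \<Gamma> \<Longrightarrow> pl i \<le> measure (iso_gauss \<sigma>) {e. i \<in> f (x + e)}"
    and pl_sum: "(\<Sum>i\<in>\<Gamma>. pl i) \<le> real k'"
  shows "max (Max ((\<lambda>i. Phi_e (Phi_inv (pl i) - ereal (norm \<delta> / \<sigma>))) ` \<Gamma>))
             (real k' / real (card \<Gamma>) * Phi_e (Phi_inv ((\<Sum>i\<in>\<Gamma>. pl i) / real k') - ereal (norm \<delta> / \<sigma>)))
           \<le> Max ((\<lambda>i. measure (iso_gauss \<sigma>) {e. i \<in> f (x + \<delta> + e)}) ` \<Gamma>)"
proof -
  define h :: "nat \<Rightarrow> 'a \<Rightarrow> real" where "h i e = indicator {w. i \<in> f w} (x + e)" for i e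
  define q where "q i = measure (iso_gauss \<sigma>) {e. i \<in> f (x + \<delta> + e)}" for i
  have [measurable]: "h i \<in> borel_measurable borel" for i
    using sets_multilabel_classifier_label[OF f] unfolding h_def by measurable
  have h: "0 \<le> h i z" "h i z \<le> 1" for i z
    by (simp_all add: h_def split: split_indicator)
  have count: "(\<Sum>i\<in>\<Gamma>. h i z) \<le> real k'" for z
    using multilabel_classifier_label_count[OF f \<Gamma>(1)] by (simp add: h_def)
  have int_h: "integral\<^sup>L (iso_gauss \<sigma>) (h i) = measure (iso_gauss \<sigma>) {e. i \<in> f (x + e)}" for i
    using integral_iso_gauss_indicator_shift[where A = "{w. i \<in> f w}" and y = x] by (simp add: h_def[abs_def])
  have int_h_shift: "(\<integral>e. h i (\<delta> + e) \<partial>iso_gauss \<sigma>) = q i" for i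
    using integral_iso_gauss_indicator_shift[where A = "{w. i \<in> f w}" and y = "x + \<delta>"] by (simp add: h_def q_def add.assoc)
  have single: "Phi_e (Phi_inv (pl i) - ereal (norm \<delta> / \<sigma>)) \<le> q i" if "i \<in> \<Gamma>" for i
  proof -
    have "Phi_e (Phi_inv (pl i) - ereal (norm \<delta> / \<sigma>)) \<le> (\<integral>e. h i (\<delta> + e) \<partial>iso_gauss \<sigma>)"
      using pl[OF that] pl_le[OF that] h by (intro iso_gauss_shift_lower[OF \<sigma>]) (auto simp: int_h)
    then show ?thesis
      by (simp add: int_h_shift)
  qed
  have "real k' * Phi_e (Phi_inv ((\<Sum>i\<in>\<Gamma>. pl i) / real k') - ereal (norm \<delta> / \<sigma>)) \<le> (\<Sum>i\<in>\<Gamma>. q i)"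
    using iso_gauss_shift_sum_lower[OF \<sigma> \<Gamma>(1), where h = h and k = "real k'" and p = pl and \<delta> = \<delta>]
      pl pl_le pl_sum h count
    by (simp add: int_h int_h_shift)
  also have "\<dots> \<le> real (card \<Gamma>) * Max (q ` \<Gamma>)"
    using \<Gamma> by (intro sum_bounded_above) simp
  finally have "real k' / real (card \<Gamma>) * Phi_e (Phi_inv ((\<Sum>i\<in>\<Gamma>. pl i) / real k') - ereal (norm \<delta> / \<sigma>))
      \<le> Max (q ` \<Gamma>)"
    using \<Gamma> by (simp add: field_simps card_gt_0_iff)
  moreover have "Max ((\<lambda>i. Phi_e (Phi_inv (pl i) - ereal (norm \<delta> / \<sigma>))) ` \<Gamma>) \<le> Max (q ` \<Gamma>)"
    using \<Gamma> by (intro Max.boundedI) (auto intro: order_trans[OF single Max_ge])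
  ultimately show ?thesis
    by (simp add: q_def)
qed

lemma multilabel_smoothing_upper:
  fixes f :: "'a::euclidean_space \<Rightarrow> nat set"
  assumes f: "multilabel_classifier c k' f" and \<sigma>: "\<sigma> > 0" and \<Lambda>: "finite \<Lambda>" "\<Lambda> \<noteq> {}"
    and pu: "\<And>j. j \<in> \<Lambda> \<Longrightarrow> 0 \<le> pu j \<and> pu j \<le> 1"
    and pu_ge: "\<And>j. j \<in> \<Lambda> \<Longrightarrow> measure (iso_gauss \<sigma>) {e. j \<in> f (x + e)} \<le> pu j"
    and pu_sum: "(\<Sum>j\<in>\<Lambda>. pu j) \<le> real k'"
  shows "Min ((\<lambda>j. measure (iso_gauss \<sigma>) {e. j \<in> f (x + \<delta> + e)}) ` \<Lambda>)
           \<le> min (Min ((\<lambda>j. Phi_e (Phi_inv (pu j) + ereal (norm \<delta> / \<sigma>))) ` \<Lambda>))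
                 (real k' / real (card \<Lambda>) * Phi_e (Phi_inv ((\<Sum>j\<in>\<Lambda>. pu j) / real k') + ereal (norm \<delta> / \<sigma>)))"
proof -
  define h :: "nat \<Rightarrow> 'a \<Rightarrow> real" where "h j e = indicator {w. j \<in> f w} (x + e)" for j e
  define q where "q j = measure (iso_gauss \<sigma>) {e. j \<in> f (x + \<delta> + e)}" for j
  have [measurable]: "h j \<in> borel_measurable borel" for j
    using sets_multilabel_classifier_label[OF f] unfolding h_def by measurable
  have h: "0 \<le> h j z" "h j z \<le> 1" for j z
    by (simp_all add: h_def split: split_indicator)
  have count: "(\<Sum>j\<in>\<Lambda>. h j z) \<le> real k'" for z
    using multilabel_classifier_label_count[OF f \<Lambda>(1)] by (simp add: h_def)
  have int_h: "integral\<^sup>L (iso_gauss \<sigma>) (h j) = measure (iso_gauss \<sigma>) {e. j \<in> f (x + e)}" for j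
    using integral_iso_gauss_indicator_shift[where A = "{w. j \<in> f w}" and y = x] by (simp add: h_def[abs_def])
  have int_h_shift: "(\<integral>e. h j (\<delta> + e) \<partial>iso_gauss \<sigma>) = q j" for j
    using integral_iso_gauss_indicator_shift[where A = "{w. j \<in> f w}" and y = "x + \<delta>"] by (simp add: h_def q_def add.assoc)
  have single: "q j \<le> Phi_e (Phi_inv (pu j) + ereal (norm \<delta> / \<sigma>))" if "j \<in> \<Lambda>" for j
  proof -
    have "(\<integral>e. h j (\<delta> + e) \<partial>iso_gauss \<sigma>) \<le> Phi_e (Phi_inv (pu j) + ereal (norm \<delta> / \<sigma>))"
      using pu[OF that] pu_ge[OF that] h by (intro iso_gauss_shift_upper[OF \<sigma>]) (auto simp: int_h)
    then show ?thesis
      by (simp add: int_h_shift)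
  qed
  have "real (card \<Lambda>) * Min (q ` \<Lambda>) \<le> (\<Sum>j\<in>\<Lambda>. q j)"
    using \<Lambda> by (intro sum_bounded_below) simp
  also have "\<dots> \<le> real k' * Phi_e (Phi_inv ((\<Sum>j\<in>\<Lambda>. pu j) / real k') + ereal (norm \<delta> / \<sigma>))"
    using iso_gauss_shift_sum_upper[OF \<sigma> \<Lambda>(1), where h = h and k = "real k'" and p = pu and \<delta> = \<delta>]
      pu_ge pu_sum h count
    by (simp add: int_h int_h_shift)
  finally have "Min (q ` \<Lambda>)
      \<le> real k' / real (card \<Lambda>) * Phi_e (Phi_inv ((\<Sum>j\<in>\<Lambda>. pu j) / real k') + ereal (norm \<delta> / \<sigma>))"
    using \<Lambda> by (simp add: field_simps card_gt_0_iff)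
  moreover have "Min (q ` \<Lambda>) \<le> Min ((\<lambda>j. Phi_e (Phi_inv (pu j) + ereal (norm \<delta> / \<sigma>))) ` \<Lambda>)"
    using \<Lambda> by (intro Min.boundedI) (auto intro: order_trans[OF Min_le single])
  ultimately show ?thesis
    by (simp add: q_def)
qed

theorem mainTheorem5:
  fixes f :: "'a::euclidean_space \<Rightarrow> nat set"
    and c k' :: nat and x \<delta> :: 'a and \<sigma> :: real
    and \<Gamma> \<Lambda> :: "nat set" and pl pu :: "nat \<Rightarrow> real"
  assumes f: "multilabel_classifier c k' f"
    and \<sigma>: "\<sigma> > 0"
    and \<delta>: "\<delta> \<noteq> 0"
    and \<Gamma>: "\<Gamma> \<subseteq> {1..c}" "\<Gamma> \<noteq> {}"
    and pl: "\<And>i. i \<in> \<Gamma> \<Longrightarrow> 0 \<le> pl i \<and> pl i \<le> 1"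
    and pl_le: "\<And>i. i \<in> \<Gamma> \<Longrightarrow> pl i \<le> measure (iso_gauss \<sigma>) {e. i \<in> f (x + e)}"
    and pl_sum: "(\<Sum>i\<in>\<Gamma>. pl i) \<le> real k'"
    and \<Lambda>: "\<Lambda> \<subseteq> {1..c}" "\<Lambda> \<noteq> {}"
    and pu: "\<And>j. j \<in> \<Lambda> \<Longrightarrow> 0 \<le> pu j \<and> pu j \<le> 1"
    and pu_ge: "\<And>j. j \<in> \<Lambda> \<Longrightarrow> measure (iso_gauss \<sigma>) {e. j \<in> f (x + e)} \<le> pu j"
    and pu_sum: "(\<Sum>j\<in>\<Lambda>. pu j) \<le> real k'"
  shows "Max ((\<lambda>i. measure (iso_gauss \<sigma>) {e. i \<in> f (x + \<delta> + e)}) ` \<Gamma>)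
           \<ge> max (Max ((\<lambda>i. Phi_e (Phi_inv (pl i) - ereal (norm \<delta> / \<sigma>))) ` \<Gamma>))
                  (real k' / real (card \<Gamma>) *
                     Phi_e (Phi_inv ((\<Sum>i\<in>\<Gamma>. pl i) / real k') - ereal (norm \<delta> / \<sigma>)))
       \<and> Min ((\<lambda>j. measure (iso_gauss \<sigma>) {e. j \<in> f (x + \<delta> + e)}) ` \<Lambda>)
           \<le> min (Min ((\<lambda>j. Phi_e (Phi_inv (pu j) + ereal (norm \<delta> / \<sigma>))) ` \<Lambda>))
                  (real k' / real (card \<Lambda>) *
                     Phi_e (Phi_inv ((\<Sum>j\<in>\<Lambda>. pu j) / real k') + ereal (norm \<delta> / \<sigma>)))"
proof -
  have "finite \<Gamma>" "finite \<Lambda>"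
    using \<Gamma>(1) \<Lambda>(1) by (auto intro: finite_subset)
  then show ?thesis
    using multilabel_smoothing_lower[OF f \<sigma> _ \<Gamma>(2) pl pl_le pl_sum]
      multilabel_smoothing_upper[OF f \<sigma> _ \<Lambda>(2) pu pu_ge pu_sum]
    by simp
qed

end
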